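(* Let $E$ and $F$ be Banach spaces, let $\xi_E,\xi_F>0$, let $A\subset E$ be $\xi_E$-dense in $E$ and $B\subset F$ be $\xi_F$-dense in $F$, and let $T:A\to B$ be a surjective map satisfying $\frac{1}{M}\|x-y\|-L\le\|Tx-Ty\|\le M\|x-y\|+L$ for all $x,y\in A$ (a coarse $(M,L)$-quasi isometry from $A$ onto $B$). Then there exists a bijective coarse $\big(M,(4M^2+3)L+4\xi_F+2M\xi_E\big)$-quasi isometry $\widetilde{T}:E\to F$ such that $\|\widetilde{T}x-Tx\|\le(2M^2+2)L+2\xi_F+M\xi_E$ for all $x\in A$.
   Context: A set $S$ is $\xi$-dense in a metric space $E$ if every point of $E$ is at distance at most $\xi$ from some point of $S$. For metric spaces $E,F$, a map $T:E\to F$ is a coarse $(M,L)$-quasi isometry (with $M>0$, $L\ge0$) if $\frac{1}{M}d_E(x,y)-L\le d_F(Tx,Ty)\le M d_E(x,y)+L$ for all $x,y\in E$, and there exists $\xi>0$ such that $T(E)$ is $\xi$-dense in $F$. *)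

theory Defs
  imports "HOL-Analysis.Analysis"
begin

definition xi_dense :: "'a::metric_space set \<Rightarrow> real \<Rightarrow> bool" where
  "xi_dense S xi \<longleftrightarrow> (\<forall>x. \<exists>s\<in>S. dist x s \<le> xi)"

definition coarse_qi :: "real \<Rightarrow> real \<Rightarrow> ('a::metric_space \<Rightarrow> 'b::metric_space) \<Rightarrow> bool" where
  "coarse_qi M L T \<longleftrightarrow> M > 0 \<and> L \<ge> 0 \<and>
     (\<forall>x y. dist x y / M - L \<le> dist (T x) (T y) \<and> dist (T x) (T y) \<le> M * dist x y + L) \<and>
     (\<exists>xi>0. xi_dense (range T) xi)"

end

theory Submission
  imports Defs
begin

text \<open>A retraction \<open>a : E \<rightarrow> A\<close> moving points by at most \<open>\<xi>\<^sub>E\<close> and a coarse inverse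
  \<open>g : F \<rightarrow> A\<close> of \<open>T\<close> are injective up to bounded error: equal values of \<open>T \<circ> a\<close> or of \<open>g\<close>
  force the arguments to be close. Reading such a map along the ray \<open>n x\<close> and using that a
  Banach space contains an injective image of its own sequence space gives injections
  \<open>E \<rightarrow> F\<close> and \<open>F \<rightarrow> E\<close>; a perturbation smaller than any prescribed \<open>\<epsilon>\<close> then turns
  \<open>T \<circ> a\<close> and \<open>g\<close> themselves into injections \<open>i\<close> and \<open>j\<close>. The Schroeder-Bernstein
  bijection \<open>h\<close> of \<open>i\<close> and \<open>j\<close> agrees at every point with \<open>i\<close> or is inverted there by
  \<open>j\<close>, so each \<open>x\<close> has a point \<open>c \<in> A\<close> with \<open>x\<close> near \<open>c\<close> and \<open>h x\<close> near \<open>T c\<close>. The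
  quasi-isometry bounds for \<open>h\<close> are then inherited from those of \<open>T\<close> by the triangle
  inequality; the lower one uses \<open>M \<ge> 1\<close>, which is forced as soon as \<open>E \<noteq> 0\<close>.\<close>

text \<open>The bijection of the Knaster-Tarski proof of Schroeder-Bernstein, whose pointwise
  shape the library theorem \<open>Schroeder_Bernstein\<close> does not record.\<close>
lemma Schroeder_Bernstein_piecewise:
  fixes f :: "'a \<Rightarrow> 'b" and g :: "'b \<Rightarrow> 'a"
  assumes f: "inj f" and g: "inj g"
  shows "\<exists>h. bij h \<and> (\<forall>x. h x = f x \<or> g (h x) = x)"
proof -
  define X where "X = lfp (\<lambda>X. - g ` (- f ` X))"
  have X: "- X = g ` (- f ` X)"
    unfolding X_def by (subst lfp_unfold) (blast intro: monoI)+
  define h where "h x = (if x \<in> X then f x else inv g x)" for x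
  have h_outside: "g (h x) = x \<and> h x \<notin> f ` X" if "x \<notin> X" for x
  proof -
    from that X obtain y where "y \<notin> f ` X" "x = g y" by blast
    then show ?thesis using g that by (auto simp: h_def)
  qed
  have h_in_image: "h x \<in> f ` X \<longleftrightarrow> x \<in> X" for x
    using h_outside[of x] by (cases "x \<in> X") (simp_all add: h_def)
  have "inj h"
  proof (rule injI)
    fix a b assume eq: "h a = h b"
    then have "a \<in> X \<longleftrightarrow> b \<in> X" using h_in_image by metis
    then show "a = b"
      using eq h_outside[of a] h_outside[of b] injD[OF f] by (cases "a \<in> X") (simp_all add: h_def)
  qed
  moreover have "surj h"
  proof -
    have "y \<in> range h" for y
    proof (cases "y \<in> f ` X")
      case True then show ?thesis by (auto simp: h_def)
    next
      case False
      then have "g y \<notin> X" using X by blast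
      then have "h (g y) = y" using g by (simp add: h_def)
      then show ?thesis by (metis rangeI)
    qed
    then show ?thesis by blast
  qed
  moreover have "h x = f x \<or> g (h x) = x" for x
    using h_outside[of x] by (cases "x \<in> X") (auto simp: h_def)
  ultimately show ?thesis by (auto simp: bij_def)
qed

lemma exists_maximal_separated_subset:
  fixes C :: "'a::metric_space set"
  assumes "\<delta> > 0"
  obtains S where "S \<subseteq> C" and "pairwise (\<lambda>s t. \<delta> \<le> dist s t) S"
    and "\<And>p. p \<in> C \<Longrightarrow> \<exists>s\<in>S. dist p s < \<delta>"
proof -
  define \<F> where "\<F> = {S. S \<subseteq> C \<and> pairwise (\<lambda>s t. \<delta> \<le> dist s t) S}"
  have "\<Union>\<C> \<in> \<F>" if "\<C> \<in> chains \<F>" for \<C>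
    using that pairwise_chain_Union[of \<C>] unfolding \<F>_def chains_def by auto
  then obtain S where S: "S \<in> \<F>" and max: "\<And>X. X \<in> \<F> \<Longrightarrow> S \<subseteq> X \<Longrightarrow> X = S"
    using Zorn_Lemma[of \<F>] by blast
  have "\<exists>s\<in>S. dist p s < \<delta>" if "p \<in> C" for p
  proof (rule ccontr)
    assume far: "\<not> (\<exists>s\<in>S. dist p s < \<delta>)"
    then have "insert p S \<in> \<F>"
      using S that by (auto simp: \<F>_def pairwise_insert dist_commute not_less)
    then have "p \<in> S" using max by blast
    with far \<open>\<delta> > 0\<close> show False by force
  qed
  with S that show ?thesis by (auto simp: \<F>_def)
qed

lemma exists_inj_into_ball:
  assumes "r > 0"
  obtains \<psi> :: "'a::real_normed_vector \<Rightarrow> 'a" where "inj \<psi>" and "\<And>y. norm (\<psi> y) < r"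
proof -
  obtain f \<psi> :: "'a \<Rightarrow> 'a" where "homeomorphism (ball 0 r) UNIV f \<psi>"
    using homeomorphic_ball_UNIV[OF assms] unfolding homeomorphic_def by blast
  then have "inj \<psi>" and "\<psi> y \<in> ball 0 r" for y
    unfolding homeomorphism_def by (metis UNIV_I injI, blast)
  with that show ?thesis by simp
qed

text \<open>Rounding to a maximal \<open>2\<epsilon>/3\<close>-separated set and adding a tiny injective
  perturbation indexed by \<open>\<phi>\<close> separates the values without moving them by \<open>\<epsilon>\<close>.\<close>
lemma exists_inj_near:
  fixes f :: "'x \<Rightarrow> 'b::real_normed_vector" and \<phi> :: "'x \<Rightarrow> 'b"
  assumes "inj \<phi>" and "\<epsilon> > 0"
  obtains i where "inj i" and "\<And>x. norm (i x - f x) < \<epsilon>"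
proof -
  obtain S :: "'b set" where sep: "pairwise (\<lambda>s t. 2*\<epsilon>/3 \<le> dist s t) S"
    and near: "\<And>p. \<exists>s\<in>S. dist p s < 2*\<epsilon>/3"
    using exists_maximal_separated_subset[of "2*\<epsilon>/3" UNIV] \<open>\<epsilon> > 0\<close> by auto
  obtain q where q: "\<And>y. q y \<in> S \<and> dist y (q y) < 2*\<epsilon>/3"
    using near by metis
  obtain \<psi> :: "'b \<Rightarrow> 'b" where "inj \<psi>" and \<psi>: "\<And>y. norm (\<psi> y) < \<epsilon>/3"
    using exists_inj_into_ball[of "\<epsilon>/3"] \<open>\<epsilon> > 0\<close> by auto
  define i where "i x = q (f x) + \<psi> (\<phi> x)" for x
  have "inj i"
  proof (rule injI)
    fix x x' assume "i x = i x'"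
    then have "q (f x) - q (f x') = \<psi> (\<phi> x') - \<psi> (\<phi> x)"
      by (simp add: i_def algebra_simps)
    moreover have "norm (\<psi> (\<phi> x') - \<psi> (\<phi> x)) < 2*\<epsilon>/3"
      using norm_triangle_ineq4[of "\<psi> (\<phi> x')" "\<psi> (\<phi> x)"] \<psi>[of "\<phi> x"] \<psi>[of "\<phi> x'"] by linarith
    ultimately have "q (f x) = q (f x')"
      using sep q[of "f x"] q[of "f x'"] by (force simp: pairwise_def dist_norm)
    with \<open>i x = i x'\<close> have "\<psi> (\<phi> x) = \<psi> (\<phi> x')" by (simp add: i_def)
    with \<open>inj \<psi>\<close> \<open>inj \<phi>\<close> show "x = x'" by (simp add: inj_eq)
  qed
  moreover have "norm (i x - f x) < \<epsilon>" for x
  proof -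
    have "norm (i x - f x) \<le> norm (q (f x) - f x) + norm (\<psi> (\<phi> x))"
      unfolding i_def by (metis diff_add_eq norm_triangle_ineq)
    moreover have "norm (q (f x) - f x) < 2*\<epsilon>/3"
      using q[of "f x"] by (simp add: dist_norm norm_minus_commute)
    ultimately show ?thesis using \<psi>[of "\<phi> x"] by linarith
  qed
  ultimately show ?thesis using that by blast
qed

lemma summable_scaled_bounded:
  fixes d :: "nat \<Rightarrow> 'a::banach"
  assumes "\<And>k. norm (d k) \<le> B"
  shows "summable (\<lambda>k. (1/8::real)^k *\<^sub>R d k)"
proof (rule summable_comparison_test)
  show "\<exists>N. \<forall>k\<ge>N. norm ((1/8::real)^k *\<^sub>R d k) \<le> B * (1/8)^k"
    using assms by (auto intro!: mult_right_mono simp: mult.commute)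
  show "summable (\<lambda>k. B * (1/8::real)^k)"
    by (intro summable_mult summable_geometric) simp
qed

lemma norm_scaled_series_tail_le:
  fixes d :: "nat \<Rightarrow> 'a::banach"
  assumes "\<And>k. norm (d k) \<le> B"
  shows "norm (\<Sum>n. (1/8::real)^(n + Suc k) *\<^sub>R d (n + Suc k)) \<le> (1/8)^k * (B/7)"
proof -
  have "(\<lambda>n. B * (1/8)^Suc k * (1/8::real)^n) sums (B * (1/8)^Suc k * (1 / (1 - 1/8)))"
    by (intro sums_mult geometric_sums) simp
  then have geo: "(\<lambda>n. B * (1/8::real)^(n + Suc k)) sums ((1/8)^k * (B/7))"
    by (simp add: power_add mult_ac)
  have "norm (\<Sum>n. (1/8::real)^(n + Suc k) *\<^sub>R d (n + Suc k)) \<le> (\<Sum>n. B * (1/8::real)^(n + Suc k))"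
    using assms geo by (intro norm_suminf_le) (auto intro!: mult_right_mono simp: mult.commute sums_summable)
  with geo show ?thesis by (simp add: sums_unique[symmetric])
qed

text \<open>At the first index where two sequences differ, the term has norm at least
  \<open>8\<^sup>-\<^sup>k/2\<close>, while the tail after it has norm at most \<open>8\<^sup>-\<^sup>k \<cdot> 2/7\<close>.\<close>
lemma inj_on_scaled_series:
  fixes S :: "'a::banach set"
  assumes "S \<subseteq> cball 0 1" and sep: "pairwise (\<lambda>s t. 1/2 \<le> dist s t) S"
  shows "inj_on (\<lambda>\<sigma>. \<Sum>k. (1/8::real)^k *\<^sub>R \<sigma> k) {\<sigma>. \<forall>k. \<sigma> k \<in> S}"
proof (rule inj_onI, rule ccontr)
  fix \<sigma> \<tau> assume "\<sigma> \<in> {\<sigma>. \<forall>k. \<sigma> k \<in> S}" "\<tau> \<in> {\<sigma>. \<forall>k. \<sigma> k \<in> S}"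
    and eq: "(\<Sum>k. (1/8::real)^k *\<^sub>R \<sigma> k) = (\<Sum>k. (1/8::real)^k *\<^sub>R \<tau> k)" and "\<sigma> \<noteq> \<tau>"
  then have \<sigma>\<tau>: "norm (\<sigma> k) \<le> 1" "norm (\<tau> k) \<le> 1" "\<sigma> k \<in> S" "\<tau> k \<in> S" for k
    using assms(1) by auto
  define d where "d k = \<sigma> k - \<tau> k" for k
  have d_le: "norm (d k) \<le> 2" for k
    using norm_triangle_ineq4[of "\<sigma> k" "\<tau> k"] \<sigma>\<tau>[of k] by (simp add: d_def)
  have "(\<Sum>k. (1/8::real)^k *\<^sub>R d k) = 0"
    using suminf_diff[OF summable_scaled_bounded summable_scaled_bounded, of \<sigma> 1 \<tau> 1] \<sigma>\<tau> eq
    by (simp add: d_def scaleR_diff_right)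
  moreover obtain k0 where "d k0 \<noteq> 0" and before: "\<And>k. k < k0 \<Longrightarrow> d k = 0"
    using \<open>\<sigma> \<noteq> \<tau>\<close> exists_least_iff[of "\<lambda>k. d k \<noteq> 0"] by (auto simp: d_def fun_eq_iff)
  moreover have "(\<Sum>k<Suc k0. (1/8::real)^k *\<^sub>R d k) = (1/8)^k0 *\<^sub>R d k0"
    using before by (simp add: sum.neutral)
  ultimately have "(1/8::real)^k0 *\<^sub>R d k0 = - (\<Sum>n. (1/8::real)^(n + Suc k0) *\<^sub>R d (n + Suc k0))"
    using suminf_split_initial_segment[OF summable_scaled_bounded[of d 2], where k = "Suc k0"] d_le
    by (simp add: eq_neg_iff_add_eq_0 add.commute)
  then have "norm ((1/8::real)^k0 *\<^sub>R d k0) = norm (\<Sum>n. (1/8::real)^(n + Suc k0) *\<^sub>R d (n + Suc k0))"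
    by (metis norm_minus_cancel)
  also have "\<dots> \<le> (1/8)^k0 * (2/7)"
    using norm_scaled_series_tail_le[of d 2 k0] d_le by simp
  finally have "norm (d k0) \<le> 2/7"
    by simp
  moreover have "1/2 \<le> norm (d k0)"
    using sep \<sigma>\<tau> \<open>d k0 \<noteq> 0\<close> by (auto simp: pairwise_def d_def dist_norm)
  ultimately show False by linarith
qed

text \<open>Greedy expansion \<open>z = \<Sum>\<^sub>k 2\<^sup>-\<^sup>k s\<^sub>k\<close> with digits \<open>s\<^sub>k \<in> S\<close>.\<close>
lemma exists_inj_digit_expansion:
  fixes S :: "'a::real_normed_vector set"
  assumes "\<And>p. p \<in> cball 0 1 \<Longrightarrow> \<exists>s\<in>S. dist p s < 1/2"
  obtains enc :: "'a \<Rightarrow> nat \<Rightarrow> 'a" where "inj enc" and "\<And>y k. enc y k \<in> S"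
proof -
  obtain pick where pick: "\<And>w. w \<in> cball 0 1 \<Longrightarrow> pick w \<in> S \<and> dist w (pick w) < 1/2"
    using assms by metis
  define shift where "shift w = 2 *\<^sub>R (w - pick w)" for w
  have shift_cball: "(shift ^^ k) z \<in> cball 0 1" if "z \<in> cball 0 1" for z k
  proof (induction k)
    case (Suc k)
    then show ?case using pick[OF Suc] by (simp add: shift_def dist_norm)
  qed (use that in simp)
  have shift_diff: "shift w - shift w' = 2 *\<^sub>R (w - w')" if "pick w = pick w'" for w w'
    using that by (simp add: shift_def scaleR_diff_right)
  define digits where "digits z k = pick ((shift ^^ k) z)" for z k
  have digits_inj: "z = z'" if "z \<in> cball 0 1" "z' \<in> cball 0 1" "digits z = digits z'" for z z'
  proof -
    have diff: "z - z' = (1/2::real)^k *\<^sub>R ((shift ^^ k) z - (shift ^^ k) z')" for k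
    proof (induction k)
      case (Suc k)
      have "pick ((shift ^^ k) z) = pick ((shift ^^ k) z')"
        using \<open>digits z = digits z'\<close> by (metis digits_def)
      then show ?case using Suc shift_diff by simp
    qed simp
    have bound: "norm (z - z') \<le> (1/2)^k * 2" for k
    proof -
      have "norm ((shift ^^ k) z - (shift ^^ k) z') \<le> 2"
        using norm_triangle_ineq4[of "(shift ^^ k) z" "(shift ^^ k) z'"]
          shift_cball[OF that(1), of k] shift_cball[OF that(2), of k] by simp
      then show ?thesis by (simp add: diff[of k] mult_left_mono)
    qed
    show "z = z'"
    proof (rule ccontr)
      assume "z \<noteq> z'"
      then obtain k where "(1/2::real)^k < norm (z - z') / 2"
        using real_arch_pow_inv[of "norm (z - z') / 2" "1/2"] by auto
      with bound[of k] show False by simp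
    qed
  qed
  obtain \<psi> :: "'a \<Rightarrow> 'a" where "inj \<psi>" and \<psi>: "\<And>y. norm (\<psi> y) < 1"
    using exists_inj_into_ball[of 1] by auto
  have "inj (\<lambda>y. digits (\<psi> y))"
  proof (rule injI)
    fix y y' assume "digits (\<psi> y) = digits (\<psi> y')"
    then have "\<psi> y = \<psi> y'" using digits_inj \<psi>[of y] \<psi>[of y'] by simp
    with \<open>inj \<psi>\<close> show "y = y'" by (simp add: inj_eq)
  qed
  moreover have "digits (\<psi> y) k \<in> S" for y k
    using pick[OF shift_cball] \<psi>[of y] by (simp add: digits_def less_imp_le)
  ultimately show ?thesis using that by blast
qed

lemma exists_inj_sequences_into_banach:
  obtains e :: "(nat \<Rightarrow> 'a::banach) \<Rightarrow> 'a" where "inj e"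
proof -
  obtain S :: "'a set" where "S \<subseteq> cball 0 1" and sep: "pairwise (\<lambda>s t. 1/2 \<le> dist s t) S"
    and near: "\<And>p. p \<in> cball 0 1 \<Longrightarrow> \<exists>s\<in>S. dist p s < 1/2"
    using exists_maximal_separated_subset[of "1/2" "cball (0::'a) 1"] by auto
  obtain enc :: "'a \<Rightarrow> nat \<Rightarrow> 'a" where "inj enc" and enc: "\<And>y k. enc y k \<in> S"
    using exists_inj_digit_expansion[OF near] by blast
  define flat where "flat Y n = enc (Y (fst (prod_decode n))) (snd (prod_decode n))"
    for Y :: "nat \<Rightarrow> 'a" and n
  have "inj flat"
  proof (rule injI)
    fix Y Y' assume "flat Y = flat Y'"
    then have "flat Y (prod_encode (m, k)) = flat Y' (prod_encode (m, k))" for m k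
      by simp
    then have "enc (Y m) = enc (Y' m)" for m
      by (simp add: flat_def fun_eq_iff)
    then have "Y m = Y' m" for m
      using \<open>inj enc\<close> by (simp add: inj_eq)
    then show "Y = Y'"
      by (rule ext)
  qed
  moreover have "inj_on (\<lambda>\<sigma>. \<Sum>k. (1/8::real)^k *\<^sub>R \<sigma> k) (range flat)"
    using inj_on_scaled_series[OF \<open>S \<subseteq> cball 0 1\<close> sep] by (rule inj_on_subset) (auto simp: flat_def enc)
  ultimately have "inj ((\<lambda>\<sigma>. \<Sum>k. (1/8::real)^k *\<^sub>R \<sigma> k) \<circ> flat)"
    by (rule comp_inj_on)
  then show ?thesis using that by blast
qed

text \<open>If \<open>f x = f y\<close> forces \<open>x, y\<close> to be close, then \<open>x\<close> is determined by the
  values of \<open>f\<close> along the ray \<open>n x\<close>, and sequences in \<open>'b\<close> inject into \<open>'b\<close>.\<close>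
lemma exists_inj_if_coarsely_injective:
  fixes f :: "'a::real_normed_vector \<Rightarrow> 'b::banach"
  assumes close: "\<And>x y. f x = f y \<Longrightarrow> norm (x - y) \<le> K"
  obtains \<phi> :: "'a \<Rightarrow> 'b" where "inj \<phi>"
proof -
  obtain e :: "(nat \<Rightarrow> 'b) \<Rightarrow> 'b" where "inj e"
    using exists_inj_sequences_into_banach by blast
  have "inj (\<lambda>x. e (\<lambda>n. f (real n *\<^sub>R x)))"
  proof (rule injI)
    fix x y assume "e (\<lambda>n. f (real n *\<^sub>R x)) = e (\<lambda>n. f (real n *\<^sub>R y))"
    then have "f (real n *\<^sub>R x) = f (real n *\<^sub>R y)" for n
      using \<open>inj e\<close> by (metis injD)
    then have bound: "real n * norm (x - y) \<le> K" for n
      using close[of "real n *\<^sub>R x" "real n *\<^sub>R y"] by (simp add: scaleR_diff_right[symmetric])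
    show "x = y"
    proof (rule ccontr)
      assume "x \<noteq> y"
      then obtain n where "K < real n * norm (x - y)"
        using reals_Archimedean3[of "norm (x - y)"] by auto
      with bound[of n] show False by simp
    qed
  qed
  then show ?thesis using that by blast
qed

lemma norm_diff_triangle_ineq3:
  fixes x y u v :: "'a::real_normed_vector"
  shows "norm (x - y) \<le> norm (x - u) + norm (u - v) + norm (v - y)"
  using norm_diff_triangle_ineq[of x u u y] norm_diff_triangle_ineq[of u v v y] by simp

lemma dense_subset_far_apart:
  fixes A :: "'a::real_normed_vector set"
  assumes dense: "\<And>x. \<exists>c\<in>A. norm (x - c) \<le> \<xi>" and "(v::'a) \<noteq> 0"
  obtains c c' where "c \<in> A" and "c' \<in> A" and "R \<le> norm (c - c')"
proof -
  define p where "p = (R + 2 * \<xi>) *\<^sub>R sgn v"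
  obtain c c' where "c \<in> A" "c' \<in> A" and c: "norm (p - c) \<le> \<xi>" and c': "norm (0 - c') \<le> \<xi>"
    using dense by meson
  have "R + 2 * \<xi> \<le> norm p"
    using \<open>v \<noteq> 0\<close> by (simp add: p_def norm_sgn)
  also have "\<dots> \<le> norm (p - c) + norm (c - c') + norm (c' - 0)"
    using norm_diff_triangle_ineq3[of p 0 c c'] by simp
  finally have "R \<le> norm (c - c')"
    using c c' by simp
  with \<open>c \<in> A\<close> \<open>c' \<in> A\<close> that show ?thesis by blast
qed

lemma coarse_qi_constant_ge_one:
  fixes A :: "'a::real_normed_vector set"
  assumes "M > 0" and dense: "\<And>x. \<exists>c\<in>A. norm (x - c) \<le> \<xi>" and "(v::'a) \<noteq> 0"
    and qi: "\<And>c c'. c \<in> A \<Longrightarrow> c' \<in> A \<Longrightarrow> norm (c - c') / M - L \<le> M * norm (c - c') + L"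
  shows "M \<ge> 1"
proof (rule ccontr)
  assume "\<not> M \<ge> 1"
  with \<open>M > 0\<close> have gap: "1/M - M > 0"
    by (simp add: field_simps) (smt (verit) mult_less_cancel_left1)
  obtain c c' where "c \<in> A" "c' \<in> A" and far: "(2 * L + 1) / (1/M - M) \<le> norm (c - c')"
    using dense_subset_far_apart[OF dense \<open>v \<noteq> 0\<close>] by blast
  have "2 * L + 1 \<le> (1/M - M) * norm (c - c')"
    using far gap by (simp add: pos_divide_le_eq mult.commute)
  also have "\<dots> \<le> 2 * L"
    using qi[OF \<open>c \<in> A\<close> \<open>c' \<in> A\<close>] by (simp add: left_diff_distrib)
  finally show False by simp
qed

lemma shadowing_dist_upper:
  fixes T h :: "'a::real_normed_vector \<Rightarrow> 'b::real_normed_vector"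
  assumes "M \<ge> 0"
    and upper: "\<And>c c'. c \<in> A \<Longrightarrow> c' \<in> A \<Longrightarrow> norm (T c - T c') \<le> M * norm (c - c') + L"
    and shadow: "\<And>x. \<exists>c\<in>A. norm (x - c) \<le> \<alpha> \<and> norm (h x - T c) \<le> \<beta>"
  shows "norm (h x - h y) \<le> M * norm (x - y) + (L + 2 * M * \<alpha> + 2 * \<beta>)"
proof -
  obtain c c' where "c \<in> A" "c' \<in> A" and c: "norm (x - c) \<le> \<alpha>" "norm (h x - T c) \<le> \<beta>"
    and c': "norm (y - c') \<le> \<alpha>" "norm (h y - T c') \<le> \<beta>"
    using shadow by meson
  have "norm (c - c') \<le> norm (x - y) + 2 * \<alpha>"
    using norm_diff_triangle_ineq3[of c c' x y] norm_minus_commute[of c x] c c' by linarith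
  then have "M * norm (c - c') \<le> M * norm (x - y) + 2 * M * \<alpha>"
    using mult_left_mono[OF _ \<open>M \<ge> 0\<close>] by (fastforce simp: distrib_left)
  moreover have "norm (h x - h y) \<le> norm (h x - T c) + norm (T c - T c') + norm (T c' - h y)"
    by (rule norm_diff_triangle_ineq3)
  ultimately show ?thesis
    using upper[OF \<open>c \<in> A\<close> \<open>c' \<in> A\<close>] c c' norm_minus_commute[of "T c'" "h y"] by linarith
qed

lemma shadowing_dist_lower:
  fixes T h :: "'a::real_normed_vector \<Rightarrow> 'b::real_normed_vector"
  assumes "M \<ge> 1"
    and lower: "\<And>c c'. c \<in> A \<Longrightarrow> c' \<in> A \<Longrightarrow> norm (c - c') / M - L \<le> norm (T c - T c')"
    and shadow: "\<And>x. \<exists>c\<in>A. norm (x - c) \<le> \<alpha> \<and> norm (h x - T c) \<le> \<beta>"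
  shows "norm (x - y) / M - (L + 2 * \<alpha> + 2 * \<beta>) \<le> norm (h x - h y)"
proof -
  obtain c c' where "c \<in> A" "c' \<in> A" and c: "norm (x - c) \<le> \<alpha>" "norm (h x - T c) \<le> \<beta>"
    and c': "norm (y - c') \<le> \<alpha>" "norm (h y - T c') \<le> \<beta>"
    using shadow by meson
  have "\<alpha> \<ge> 0"
    using c(1) norm_ge_zero order_trans by blast
  have "norm (x - y) \<le> norm (c - c') + 2 * \<alpha>"
    using norm_diff_triangle_ineq3[of x y c c'] norm_minus_commute[of c' y] c c' by linarith
  then have "norm (x - y) / M \<le> (norm (c - c') + 2 * \<alpha>) / M"
    using \<open>M \<ge> 1\<close> by (simp add: divide_right_mono)
  also have "\<dots> \<le> norm (c - c') / M + 2 * \<alpha>"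
    using \<open>M \<ge> 1\<close> \<open>\<alpha> \<ge> 0\<close> by (simp add: add_divide_distrib divide_le_eq mult_le_cancel_left1)
  also have "\<dots> \<le> norm (T c - T c') + L + 2 * \<alpha>"
    using lower[OF \<open>c \<in> A\<close> \<open>c' \<in> A\<close>] by simp
  also have "\<dots> \<le> norm (h x - h y) + 2 * \<beta> + L + 2 * \<alpha>"
    using norm_diff_triangle_ineq3[of "T c" "T c'" "h x" "h y"] norm_minus_commute[of "T c" "h x"] c c'
    by linarith
  finally show ?thesis by linarith
qed

lemma exists_retraction_onto_dense:
  fixes A :: "'a::real_normed_vector set"
  assumes dense: "\<And>x. \<exists>c\<in>A. norm (x - c) \<le> \<xi>"
  obtains a where "\<And>x. a x \<in> A" and "\<And>x. norm (x - a x) \<le> \<xi>" and "\<And>x. x \<in> A \<Longrightarrow> a x = x"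
proof -
  have "\<xi> \<ge> 0"
    using dense[of 0] norm_ge_zero order_trans by blast
  have "\<exists>c. c \<in> A \<and> norm (x - c) \<le> \<xi> \<and> (x \<in> A \<longrightarrow> c = x)" for x
    using dense[of x] \<open>\<xi> \<ge> 0\<close> by (cases "x \<in> A") auto
  then show ?thesis
    using that by metis
qed

lemma exists_inj_near_coarse_inverses:
  fixes T :: "'a::banach \<Rightarrow> 'b::banach" and a :: "'a \<Rightarrow> 'a" and g :: "'b \<Rightarrow> 'a"
  assumes "M > 0" and "\<epsilon> > 0"
    and lower: "\<And>c c'. c \<in> A \<Longrightarrow> c' \<in> A \<Longrightarrow> norm (c - c') / M - L \<le> norm (T c - T c')"
    and a: "\<And>x. a x \<in> A \<and> norm (x - a x) \<le> \<xi>E"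
    and g: "\<And>y. norm (y - T (g y)) \<le> \<xi>F"
  obtains i j where "inj i" and "\<And>x. norm (i x - T (a x)) < \<epsilon>"
    and "inj j" and "\<And>y. norm (j y - g y) < \<epsilon>"
proof -
  obtain \<phi>\<^sub>1 :: "'a \<Rightarrow> 'b" where "inj \<phi>\<^sub>1"
  proof (rule exists_inj_if_coarsely_injective[of "\<lambda>x. T (a x)" "2 * \<xi>E + M * L"])
    fix x y assume "T (a x) = T (a y)"
    then have "norm (a x - a y) \<le> M * L"
      using lower[of "a x" "a y"] a \<open>M > 0\<close> by (simp add: field_simps)
    then show "norm (x - y) \<le> 2 * \<xi>E + M * L"
      using norm_diff_triangle_ineq3[of x y "a x" "a y"] a[of x] a[of y] norm_minus_commute[of "a y" y]
      by linarith
  qed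
  obtain \<phi>\<^sub>2 :: "'b \<Rightarrow> 'a" where "inj \<phi>\<^sub>2"
  proof (rule exists_inj_if_coarsely_injective[of g "2 * \<xi>F"])
    fix y y' assume "g y = g y'"
    then show "norm (y - y') \<le> 2 * \<xi>F"
      using norm_diff_triangle_ineq[of y "T (g y')" "T (g y')" y'] g[of y] g[of y']
        norm_minus_commute[of y' "T (g y')"] by simp
  qed
  show ?thesis
    using exists_inj_near[OF \<open>inj \<phi>\<^sub>1\<close> \<open>\<epsilon> > 0\<close>, where f = "\<lambda>x. T (a x)"]
      exists_inj_near[OF \<open>inj \<phi>\<^sub>2\<close> \<open>\<epsilon> > 0\<close>, where f = g] that
    by metis
qed

lemma exists_bij_shadowing:
  fixes A :: "'a::banach set" and T :: "'a \<Rightarrow> 'b::banach"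
  assumes "M > 0" and "L \<ge> 0"
    and lower: "\<And>c c'. c \<in> A \<Longrightarrow> c' \<in> A \<Longrightarrow> norm (c - c') / M - L \<le> norm (T c - T c')"
    and upper: "\<And>c c'. c \<in> A \<Longrightarrow> c' \<in> A \<Longrightarrow> norm (T c - T c') \<le> M * norm (c - c') + L"
    and dense_A: "\<And>x. \<exists>c\<in>A. norm (x - c) \<le> \<xi>E"
    and dense_TA: "\<And>y. \<exists>c\<in>A. norm (y - T c) \<le> \<xi>F"
    and "\<epsilon> > 0"
  obtains h where "bij h"
    and "\<And>x. \<exists>c\<in>A. norm (x - c) \<le> \<xi>E + \<epsilon> \<and> norm (h x - T c) \<le> \<xi>F + \<epsilon>"
    and "\<And>x. x \<in> A \<Longrightarrow> norm (h x - T x) \<le> \<epsilon> + \<xi>F + M * \<epsilon> + L"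
proof -
  obtain a where a: "\<And>x. a x \<in> A" "\<And>x. norm (x - a x) \<le> \<xi>E" and a_id: "\<And>x. x \<in> A \<Longrightarrow> a x = x"
    using exists_retraction_onto_dense[OF dense_A] by blast
  obtain g where g: "\<And>y. g y \<in> A \<and> norm (y - T (g y)) \<le> \<xi>F"
    using dense_TA by metis
  obtain i j where "inj i" and i: "\<And>x. norm (i x - T (a x)) < \<epsilon>"
    and "inj j" and j: "\<And>y. norm (j y - g y) < \<epsilon>"
    using exists_inj_near_coarse_inverses[where a = a and g = g, OF \<open>M > 0\<close> \<open>\<epsilon> > 0\<close> lower] a g
    by blast
  obtain h where "bij h" and h: "\<And>x. h x = i x \<or> j (h x) = x"
    using Schroeder_Bernstein_piecewise[OF \<open>inj i\<close> \<open>inj j\<close>] by blast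
  have "\<xi>E \<ge> 0" and "\<xi>F \<ge> 0" and "M * \<epsilon> \<ge> 0"
    using a(2)[of 0] g[of 0] \<open>M > 0\<close> \<open>\<epsilon> > 0\<close> norm_ge_zero order_trans by (blast, blast, simp)
  have "\<exists>c\<in>A. norm (x - c) \<le> \<xi>E + \<epsilon> \<and> norm (h x - T c) \<le> \<xi>F + \<epsilon>" for x
  proof (cases "h x = i x")
    case True
    then show ?thesis
      using a[of x] i[of x] \<open>\<epsilon> > 0\<close> \<open>\<xi>F \<ge> 0\<close> by (intro bexI[of _ "a x"]) auto
  next
    case False
    then have "norm (x - g (h x)) < \<epsilon>"
      using h[of x] j[of "h x"] by metis
    then show ?thesis
      using g[of "h x"] \<open>\<epsilon> > 0\<close> \<open>\<xi>E \<ge> 0\<close> by (intro bexI[of _ "g (h x)"]) auto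
  qed
  moreover have "norm (h x - T x) \<le> \<epsilon> + \<xi>F + M * \<epsilon> + L" if "x \<in> A" for x
  proof (cases "h x = i x")
    case True
    then show ?thesis
      using i[of x] a_id[OF that] \<open>\<xi>F \<ge> 0\<close> \<open>L \<ge> 0\<close> \<open>M * \<epsilon> \<ge> 0\<close> by simp
  next
    case False
    then have "M * norm (g (h x) - x) \<le> M * \<epsilon>"
      using h[of x] j[of "h x"] \<open>M > 0\<close> by (simp add: norm_minus_commute)
    then have "norm (T (g (h x)) - T x) \<le> M * \<epsilon> + L"
      using upper[of "g (h x)" x] g that by fastforce
    then show ?thesis
      using norm_triangle_ineq[of "h x - T (g (h x))" "T (g (h x)) - T x"] g[of "h x"] \<open>\<epsilon> > 0\<close>
      by (simp add: norm_minus_commute)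
  qed
  ultimately show ?thesis
    using that \<open>bij h\<close> by blast
qed

lemma coarse_qi_if_surj:
  fixes T :: "'a::metric_space \<Rightarrow> 'b::metric_space"
  assumes "surj T" and "M > 0" and "L \<ge> 0"
    and "\<And>x y. dist x y / M - L \<le> dist (T x) (T y)"
    and "\<And>x y. dist (T x) (T y) \<le> M * dist x y + L"
  shows "coarse_qi M L T"
proof -
  have "xi_dense (range T) 1"
    using \<open>surj T\<close> by (simp add: xi_dense_def) (metis dist_self zero_le_one)
  then show ?thesis
    unfolding coarse_qi_def using assms zero_less_one by blast
qed

lemma coarse_qi_mono:
  assumes "coarse_qi M L T" and "L \<le> L'"
  shows "coarse_qi M L' T"
  using assms unfolding coarse_qi_def by (smt (verit))

text \<open>The choice \<open>\<epsilon> = \<xi>\<^sub>F / (1 + M)\<close> makes the losses \<open>\<epsilon>\<close> and \<open>M \<epsilon>\<close> add up to \<open>\<xi>\<^sub>F\<close>.\<close>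
theorem exists_bij_coarse_qi_near:
  fixes A :: "'a::banach set" and T :: "'a \<Rightarrow> 'b::banach"
  assumes "M > 0" and "L \<ge> 0" and "\<xi>F > 0"
    and lower: "\<And>c c'. c \<in> A \<Longrightarrow> c' \<in> A \<Longrightarrow> norm (c - c') / M - L \<le> norm (T c - T c')"
    and upper: "\<And>c c'. c \<in> A \<Longrightarrow> c' \<in> A \<Longrightarrow> norm (T c - T c') \<le> M * norm (c - c') + L"
    and dense_A: "\<And>x. \<exists>c\<in>A. norm (x - c) \<le> \<xi>E"
    and dense_TA: "\<And>y. \<exists>c\<in>A. norm (y - T c) \<le> \<xi>F"
  obtains h where "bij h" and "coarse_qi M (L + 2 * (M * \<xi>E) + 4 * \<xi>F) h"
    and "\<And>x. x \<in> A \<Longrightarrow> norm (h x - T x) \<le> L + 2 * \<xi>F"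
proof -
  have "\<xi>E \<ge> 0"
    using dense_A norm_ge_zero order_trans by blast
  then have "M * \<xi>E \<ge> 0"
    using \<open>M > 0\<close> by simp
  define \<epsilon> where "\<epsilon> = \<xi>F / (1 + M)"
  have "\<epsilon> > 0" and "(1 + M) * \<epsilon> = \<xi>F"
    using \<open>M > 0\<close> \<open>\<xi>F > 0\<close> by (simp_all add: \<epsilon>_def)
  then have \<epsilon>: "\<epsilon> + M * \<epsilon> = \<xi>F"
    by (simp add: distrib_right)
  obtain h where "bij h"
    and shadow: "\<And>x. \<exists>c\<in>A. norm (x - c) \<le> \<xi>E + \<epsilon> \<and> norm (h x - T c) \<le> \<xi>F + \<epsilon>"
    and displacement: "\<And>x. x \<in> A \<Longrightarrow> norm (h x - T x) \<le> \<epsilon> + \<xi>F + M * \<epsilon> + L"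
    using exists_bij_shadowing[OF \<open>M > 0\<close> \<open>L \<ge> 0\<close> lower upper dense_A dense_TA \<open>\<epsilon> > 0\<close>] by blast
  have "L + 2 * M * (\<xi>E + \<epsilon>) + 2 * (\<xi>F + \<epsilon>) = L + 2 * (M * \<xi>E) + 4 * \<xi>F"
    unfolding \<epsilon>[symmetric] by (simp add: algebra_simps)
  then have "coarse_qi M (L + 2 * (M * \<xi>E) + 4 * \<xi>F) h"
  proof (intro coarse_qi_if_surj)
    show "dist (h x) (h y) \<le> M * dist x y + (L + 2 * (M * \<xi>E) + 4 * \<xi>F)"
      if "L + 2 * M * (\<xi>E + \<epsilon>) + 2 * (\<xi>F + \<epsilon>) = L + 2 * (M * \<xi>E) + 4 * \<xi>F" for x y
    proof -
      have "norm (h x - h y) \<le> M * norm (x - y) + (L + 2 * M * (\<xi>E + \<epsilon>) + 2 * (\<xi>F + \<epsilon>))"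
        using less_imp_le[OF \<open>M > 0\<close>] upper shadow by (rule shadowing_dist_upper)
      with that show ?thesis
        unfolding dist_norm by linarith
    qed
    show "dist x y / M - (L + 2 * (M * \<xi>E) + 4 * \<xi>F) \<le> dist (h x) (h y)" for x y
    proof (cases "x = y")
      case False
      then have "M \<ge> 1"
        using coarse_qi_constant_ge_one[OF \<open>M > 0\<close> dense_A, of "x - y" L] lower upper
        by (meson order_trans right_minus_eq)
      then have "\<xi>E \<le> M * \<xi>E" and "\<epsilon> \<le> M * \<epsilon>"
        using \<open>\<xi>E \<ge> 0\<close> \<open>\<epsilon> > 0\<close> by (simp_all add: mult_le_cancel_right1)
      moreover have "norm (x - y) / M - (L + 2 * (\<xi>E + \<epsilon>) + 2 * (\<xi>F + \<epsilon>)) \<le> norm (h x - h y)"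
        using \<open>M \<ge> 1\<close> lower shadow by (rule shadowing_dist_lower)
      ultimately show ?thesis
        using \<epsilon> by (simp add: dist_norm algebra_simps)
    qed (use \<open>L \<ge> 0\<close> \<open>M * \<xi>E \<ge> 0\<close> \<open>\<xi>F > 0\<close> in simp)
  qed (use \<open>M > 0\<close> \<open>L \<ge> 0\<close> \<open>M * \<xi>E \<ge> 0\<close> \<open>\<xi>F > 0\<close> \<open>bij h\<close> bij_is_surj in auto)
  moreover have "norm (h x - T x) \<le> L + 2 * \<xi>F" if "x \<in> A" for x
    using displacement[OF that] \<epsilon> by linarith
  ultimately show ?thesis
    using that \<open>bij h\<close> by blast
qed

theorem fact1:
  fixes A :: "'a::banach set" and B :: "'b::banach set" and T :: "'a \<Rightarrow> 'b"
    and M L xiE xiF :: real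
  assumes "M > 0" and "L \<ge> 0"
    and "xiE > 0" and "xiF > 0"
    and "xi_dense A xiE" and "xi_dense B xiF"
    and "T ` A = B"
    and "\<forall>x\<in>A. \<forall>y\<in>A. norm (x - y) / M - L \<le> norm (T x - T y)
                         \<and> norm (T x - T y) \<le> M * norm (x - y) + L"
  shows "\<exists>T'::'a \<Rightarrow> 'b. bij T' \<and>
           coarse_qi M ((4 * M^2 + 3) * L + 4 * xiF + 2 * M * xiE) T' \<and>
           (\<forall>x\<in>A. norm (T' x - T x) \<le> (2 * M^2 + 2) * L + 2 * xiF + M * xiE)"
proof -
  have lower: "\<And>c c'. c \<in> A \<Longrightarrow> c' \<in> A \<Longrightarrow> norm (c - c') / M - L \<le> norm (T c - T c')"
    and upper: "\<And>c c'. c \<in> A \<Longrightarrow> c' \<in> A \<Longrightarrow> norm (T c - T c') \<le> M * norm (c - c') + L"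
    using assms(8) by blast+
  have dense_A: "\<And>x. \<exists>c\<in>A. norm (x - c) \<le> xiE"
    using assms(5) by (simp add: xi_dense_def dist_norm)
  have dense_TA: "\<And>y. \<exists>c\<in>A. norm (y - T c) \<le> xiF"
    using assms(6,7) by (auto simp: xi_dense_def dist_norm)
  obtain h where "bij h" and qi: "coarse_qi M (L + 2 * (M * xiE) + 4 * xiF) h"
    and near: "\<And>x. x \<in> A \<Longrightarrow> norm (h x - T x) \<le> L + 2 * xiF"
    using exists_bij_coarse_qi_near[OF assms(1,2,4) lower upper dense_A dense_TA] by blast
  have bounds: "M\<^sup>2 * L \<ge> 0" "M * xiE \<ge> 0" "L \<ge> 0"
    using assms(1-3) by simp_all
  have constants: "(4 * M^2 + 3) * L + 4 * xiF + 2 * M * xiE = 4 * (M\<^sup>2 * L) + 3 * L + 4 * xiF + 2 * (M * xiE)"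
    "(2 * M^2 + 2) * L + 2 * xiF + M * xiE = 2 * (M\<^sup>2 * L) + 2 * L + 2 * xiF + M * xiE"
    by algebra+
  have "coarse_qi M ((4 * M^2 + 3) * L + 4 * xiF + 2 * M * xiE) h"
    using qi by (rule coarse_qi_mono) (use bounds constants in linarith)
  moreover have "norm (h x - T x) \<le> (2 * M^2 + 2) * L + 2 * xiF + M * xiE" if "x \<in> A" for x
    using near[OF that] bounds constants by linarith
  ultimately show ?thesis
    using \<open>bij h\<close> by blast
qed

end
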